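(* Let $\mathscr{A}$ be a $C^*$-algebra with identity such that the set $\mathscr{A}'_m$ of all linear multiplicative functionals $\varphi\colon\mathscr{A}\to\mathbb{C}$ is total (i.e., if $\varphi(a)=0$ for all $\varphi\in\mathscr{A}'_m$ then $a=0$). Let $\mathscr{X}$ be a right $\mathscr{A}$-module which is also a normed space. Let $E, F\colon \mathscr{X}^2\to\mathscr{A}$ be multi-$\mathscr{A}$-linear functions, and assume that $E$ is bounded and strong. Then the following are equivalent: (i) for all $x,y\in\mathscr{X}$, $E(x,y)=0$ implies $F(x,y)=0$; (ii) there exists $c\in\mathscr{A}$ such that $F(x,y)=cE(x,y)$ for all $x,y\in\mathscr{X}$. Moreover, each of these conditions implies that $F$ is bounded.
   Context: A right $\mathscr{A}$-module $\mathscr{X}$ is a complex vector space with a right $\mathscr{A}$-action satisfying $(\alpha x)a=x(\alpha a)=\alpha(xa)$. A function $F\colon\mathscr{X}^n\to\mathscr{A}$ is multi-$\mathscr{A}$-linear if for all $x_1,\dots,x_n,y_j\in\mathscr{X}$, $\alpha\in\mathbb{C}$, $a\in\mathscr{A}$ and $j=1,\dots,n$: (A) $F$ is additive in the $j$-th variable; (B) $F(x_1,\dots,\alpha x_j a,\dots,x_n)=\alpha F(x_1,\dots,x_n)a$ if $j$ is even; (C) $F(x_1,\dots,\alpha x_j a,\dots,x_n)=\overline{\alpha}a^*F(x_1,\dots,x_n)$ if $j$ is odd. $F$ is bounded if there is $M$ with $\|F(x_1,\dots,x_n)\|\le M\|x_1\|\cdots\|x_n\|$ for all $x_i$. With $G_{\mathscr{A}}$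 the set of invertible elements of $\mathscr{A}$, $F$ is strong if there exists $w\in\mathscr{X}$ with $F(w,w,\dots,w)\in G_{\mathscr{A}}$. *)

theory Defs
  imports "HOL-Analysis.Analysis"
begin

class cvector = real_vector +
  fixes scaleC :: "complex \<Rightarrow> 'a \<Rightarrow> 'a"
  assumes scaleC_add_right: "scaleC \<alpha> (x + y) = scaleC \<alpha> x + scaleC \<alpha> y"
    and scaleC_add_left: "scaleC (\<alpha> + \<beta>) x = scaleC \<alpha> x + scaleC \<beta> x"
    and scaleC_scaleC: "scaleC \<alpha> (scaleC \<beta> x) = scaleC (\<alpha> * \<beta>) x"
    and scaleC_one: "scaleC 1 x = x"
    and scaleR_scaleC: "scaleR r x = scaleC (complex_of_real r) x"

class cnormed_vector = cvector + real_normed_vector +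
  assumes norm_scaleC: "norm (scaleC \<alpha> x) = cmod \<alpha> * norm x"

class cstar_algebra_1 = cnormed_vector + real_normed_algebra_1 + banach +
  fixes cstar :: "'a \<Rightarrow> 'a"
  assumes scaleC_mult_left: "scaleC \<alpha> (x * y) = scaleC \<alpha> x * y"
    and scaleC_mult_right: "scaleC \<alpha> (x * y) = x * scaleC \<alpha> y"
    and cstar_cstar: "cstar (cstar x) = x"
    and cstar_add: "cstar (x + y) = cstar x + cstar y"
    and cstar_scaleC: "cstar (scaleC \<alpha> x) = scaleC (cnj \<alpha>) (cstar x)"
    and cstar_mult: "cstar (x * y) = cstar y * cstar x"
    and cstar_identity: "norm (cstar x * x) = (norm x)\<^sup>2"

definition mult_functional :: "('a::cstar_algebra_1 \<Rightarrow> complex) \<Rightarrow> bool" where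
  "mult_functional \<phi> \<longleftrightarrow>
     (\<forall>a b. \<phi> (a + b) = \<phi> a + \<phi> b) \<and>
     (\<forall>\<alpha> a. \<phi> (scaleC \<alpha> a) = \<alpha> * \<phi> a) \<and>
     (\<forall>a b. \<phi> (a * b) = \<phi> a * \<phi> b)"

definition mult_functionals_total :: "'a::cstar_algebra_1 itself \<Rightarrow> bool" where
  "mult_functionals_total _ \<longleftrightarrow>
     (\<forall>a::'a. (\<forall>\<phi>. mult_functional \<phi> \<longrightarrow> \<phi> a = 0) \<longrightarrow> a = 0)"

definition right_module ::
  "('x::cvector \<Rightarrow> 'a::cstar_algebra_1 \<Rightarrow> 'x) \<Rightarrow> bool" where
  "right_module act \<longleftrightarrow>
     (\<forall>x y a. act (x + y) a = act x a + act y a) \<and>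
     (\<forall>x a b. act x (a + b) = act x a + act x b) \<and>
     (\<forall>x a b. act x (a * b) = act (act x a) b) \<and>
     (\<forall>\<alpha> x a. act (scaleC \<alpha> x) a = act x (scaleC \<alpha> a) \<and>
               act x (scaleC \<alpha> a) = scaleC \<alpha> (act x a))"

text \<open>Multi-A-linear functions of two variables (n = 2): variable 1 is odd, variable 2 even.\<close>
definition multi_A_linear2 ::
  "('x::cvector \<Rightarrow> 'a::cstar_algebra_1 \<Rightarrow> 'x) \<Rightarrow> ('x \<Rightarrow> 'x \<Rightarrow> 'a) \<Rightarrow> bool" where
  "multi_A_linear2 act F \<longleftrightarrow>
     (\<forall>x x' y. F (x + x') y = F x y + F x' y) \<and>
     (\<forall>x y y'. F x (y + y') = F x y + F x y') \<and>
     (\<forall>x y \<alpha> a. F (act (scaleC \<alpha> x) a) y = scaleC (cnj \<alpha>) (cstar a * F x y)) \<and>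
     (\<forall>x y \<alpha> a. F x (act (scaleC \<alpha> y) a) = scaleC \<alpha> (F x y * a))"

definition bounded2 :: "('x::real_normed_vector \<Rightarrow> 'x \<Rightarrow> 'a::real_normed_vector) \<Rightarrow> bool" where
  "bounded2 F \<longleftrightarrow> (\<exists>M. \<forall>x y. norm (F x y) \<le> M * norm x * norm y)"

definition invertible_el :: "'a::ring_1 \<Rightarrow> bool" where
  "invertible_el a \<longleftrightarrow> (\<exists>b. a * b = 1 \<and> b * a = 1)"

definition strong2 :: "('x \<Rightarrow> 'x \<Rightarrow> 'a::ring_1) \<Rightarrow> bool" where
  "strong2 F \<longleftrightarrow> (\<exists>w. invertible_el (F w w))"

end

theory Submission
  imports Defs
begin

text \<open>Totality of the multiplicative functionals makes the algebra commutative, since every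
  such functional kills commutators. Writing \<open>y a\<close> for \<open>act y a\<close>, suppose \<open>E(x,y) = 0\<close> implies
  \<open>F(x,y) = 0\<close>. Since \<open>E(x, y E(x,w) - w E(x,y)) = 0\<close>, also \<open>F(x, y E(x,w) - w E(x,y)) = 0\<close>, and
  similarly in the first variable; this gives the cross relations
  \<open>F(x,y) E(x,w) = F(x,w) E(x,y)\<close> and \<open>E(w,y) F(x,y) = E(x,y) F(w,y)\<close>. If \<open>E(w,w)\<close> is invertible,
  they force \<open>G = F - c E\<close> to vanish for \<open>c = F(w,w) E(w,w)\<^sup>-\<^sup>1\<close>: \<open>G\<close> inherits the kernel
  condition and \<open>G(w,w) = 0\<close>, so \<open>G(w,\<cdot>) = 0\<close> and \<open>G(\<cdot>,w) = 0\<close>, and finally \<open>G(x,y) = 0\<close> after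
  replacing \<open>y\<close> by \<open>y + w s\<close> with \<open>E(w, y + w s) = 1\<close>.\<close>

lemma mult_functionals_total_imp_commute:
  fixes a b :: "'a::cstar_algebra_1"
  assumes "mult_functionals_total TYPE('a)"
  shows "a * b = b * a"
proof -
  have "\<phi> (a * b - b * a) = 0" if "mult_functional \<phi>" for \<phi> :: "'a \<Rightarrow> complex"
  proof -
    have "Modules.additive \<phi>" "\<And>u v. \<phi> (u * v) = \<phi> u * \<phi> v"
      using that unfolding mult_functional_def Modules.additive_def by auto
    then show ?thesis by (simp add: Modules.additive.diff)
  qed
  then have "a * b - b * a = 0"
    using assms unfolding mult_functionals_total_def by blast
  then show ?thesis by simp
qed

text \<open>The part of multi-\<open>\<A>\<close>-linearity that the argument uses: biadditivity and the action of
  the algebra, with no complex scalars.\<close>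

definition A_sesquilinear ::
  "('x::cvector \<Rightarrow> 'a::cstar_algebra_1 \<Rightarrow> 'x) \<Rightarrow> ('x \<Rightarrow> 'x \<Rightarrow> 'a) \<Rightarrow> bool" where
  "A_sesquilinear act F \<longleftrightarrow>
     (\<forall>x x' y. F (x + x') y = F x y + F x' y) \<and>
     (\<forall>x y y'. F x (y + y') = F x y + F x y') \<and>
     (\<forall>x a y. F (act x a) y = cstar a * F x y) \<and>
     (\<forall>x y a. F x (act y a) = F x y * a)"

lemma A_sesquilinearD:
  assumes "A_sesquilinear act F"
  shows A_sesquilinear_add_left: "F (x + x') y = F x y + F x' y"
    and A_sesquilinear_add_right: "F x (y + y') = F x y + F x y'"
    and A_sesquilinear_diff_left: "F (x - x') y = F x y - F x' y"
    and A_sesquilinear_diff_right: "F x (y - y') = F x y - F x y'"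
    and A_sesquilinear_act_left: "F (act x a) y = cstar a * F x y"
    and A_sesquilinear_act_right: "F x (act y a) = F x y * a"
proof -
  have "Modules.additive (\<lambda>x. F x y)" "Modules.additive (F x)"
    using assms unfolding A_sesquilinear_def Modules.additive_def by auto
  then show "F (x - x') y = F x y - F x' y" "F x (y - y') = F x y - F x y'"
    by (auto dest: Modules.additive.diff)
  show "F (x + x') y = F x y + F x' y" "F x (y + y') = F x y + F x y'"
    and "F (act x a) y = cstar a * F x y" "F x (act y a) = F x y * a"
    using assms unfolding A_sesquilinear_def by auto
qed

lemma multi_A_linear2_imp_A_sesquilinear:
  assumes "multi_A_linear2 act F"
  shows "A_sesquilinear act F"
proof -
  have "F (act x a) y = cstar a * F x y" "F x (act y a) = F x y * a" for x y a
    using assms unfolding multi_A_linear2_def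
    by (metis complex_cnj_one scaleC_one)+
  with assms show ?thesis
    unfolding multi_A_linear2_def A_sesquilinear_def by blast
qed

lemma A_sesquilinear_diff_mult_left:
  fixes act :: "'x::cvector \<Rightarrow> 'a::cstar_algebra_1 \<Rightarrow> 'x"
  assumes comm: "\<And>a b :: 'a. a * b = b * a"
    and E: "A_sesquilinear act E" and F: "A_sesquilinear act F"
  shows "A_sesquilinear act (\<lambda>x y. F x y - c * E x y)"
proof -
  have "c * (cstar a * e) = cstar a * (c * e)" for a e :: 'a
    by (metis comm mult.assoc)
  with E F show ?thesis
    unfolding A_sesquilinear_def by (auto simp: algebra_simps)
qed

context
  fixes act :: "'x::cvector \<Rightarrow> 'a::cstar_algebra_1 \<Rightarrow> 'x"
    and E F :: "'x \<Rightarrow> 'x \<Rightarrow> 'a"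
  assumes comm: "\<And>a b :: 'a. a * b = b * a"
    and E: "A_sesquilinear act E" and F: "A_sesquilinear act F"
    and kernel: "\<And>x y. E x y = 0 \<Longrightarrow> F x y = 0"
begin

lemma kernel_inclusion_cross_right: "F x y * E x w = F x w * E x y"
proof -
  have "E x (act y (E x w) - act w (E x y)) = 0"
    using E by (simp add: A_sesquilinearD comm)
  then have "F x (act y (E x w) - act w (E x y)) = 0"
    by (rule kernel)
  then show ?thesis
    using F by (simp add: A_sesquilinearD)
qed

lemma kernel_inclusion_cross_left: "E w y * F x y = E x y * F w y"
proof -
  have "E (act x (cstar (E w y)) - act w (cstar (E x y))) y = 0"
    using E by (simp add: A_sesquilinearD comm cstar_cstar)
  then have "F (act x (cstar (E w y)) - act w (cstar (E x y))) y = 0"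
    by (rule kernel)
  then show ?thesis
    using F by (simp add: A_sesquilinearD cstar_cstar)
qed

lemma kernel_inclusion_vanishing:
  assumes inv: "E w w * b = 1" and diag: "F w w = 0"
  shows "F x y = 0"
proof -
  have row: "F w y = 0" for y
  proof -
    have "F w y = F w y * E w w * b"
      using inv by (simp add: mult.assoc)
    also have "\<dots> = 0"
      using kernel_inclusion_cross_right[of w y w] diag by simp
    finally show ?thesis .
  qed
  have column: "F x w = 0"
  proof -
    have "F x w = b * (E w w * F x w)"
      using inv comm[of b] by (metis mult.assoc mult_1_left)
    also have "\<dots> = 0"
      using kernel_inclusion_cross_left[of w w x] diag by simp
    finally show ?thesis .
  qed
  define s where "s = b * (1 - E w y)"
  have "E w (y + act w s) = E w y + E w w * b * (1 - E w y)"
    using E by (simp add: A_sesquilinearD s_def mult.assoc)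
  then have "E w (y + act w s) = 1"
    using inv by simp
  then have "F x (y + act w s) = 0"
    using kernel_inclusion_cross_left[of w "y + act w s" x] row by simp
  then show ?thesis
    using F column by (simp add: A_sesquilinearD)
qed

end

lemma kernel_inclusion_imp_mult_left:
  fixes act :: "'x::cvector \<Rightarrow> 'a::cstar_algebra_1 \<Rightarrow> 'x"
  assumes comm: "\<And>a b :: 'a. a * b = b * a"
    and E: "A_sesquilinear act E" and F: "A_sesquilinear act F"
    and kernel: "\<And>x y. E x y = 0 \<Longrightarrow> F x y = 0"
    and "strong2 E"
  shows "\<exists>c. \<forall>x y. F x y = c * E x y"
proof -
  obtain w b where inv: "E w w * b = 1" "b * E w w = 1"
    using \<open>strong2 E\<close> unfolding strong2_def invertible_el_def by blast
  define c where "c = F w w * b"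
  have diag: "F w w - c * E w w = 0"
    using inv by (simp add: c_def mult.assoc)
  have G: "A_sesquilinear act (\<lambda>x y. F x y - c * E x y)"
    using comm E F by (rule A_sesquilinear_diff_mult_left)
  have kernel_G: "E x y = 0 \<Longrightarrow> F x y - c * E x y = 0" for x y
    using kernel by simp
  have "F x y - c * E x y = 0" for x y
    using kernel_inclusion_vanishing[OF comm E G kernel_G inv(1) diag] .
  then show ?thesis by auto
qed

lemma bounded2_mult_left:
  fixes E :: "'x::real_normed_vector \<Rightarrow> 'x \<Rightarrow> 'a::real_normed_algebra"
  assumes "bounded2 E"
  shows "bounded2 (\<lambda>x y. c * E x y)"
proof -
  obtain M where M: "\<And>x y. norm (E x y) \<le> M * norm x * norm y"
    using assms unfolding bounded2_def by blast
  have "norm (c * E x y) \<le> (norm c * M) * norm x * norm y" for x y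
  proof -
    have "norm (c * E x y) \<le> norm c * norm (E x y)"
      by (rule norm_mult_ineq)
    also have "\<dots> \<le> norm c * (M * norm x * norm y)"
      by (simp add: M mult_left_mono)
    finally show ?thesis by (simp add: mult.assoc)
  qed
  then show ?thesis
    unfolding bounded2_def by blast
qed

theorem theorem3p5:
  fixes act :: "'x::cnormed_vector \<Rightarrow> 'a::cstar_algebra_1 \<Rightarrow> 'x"
    and E F :: "'x \<Rightarrow> 'x \<Rightarrow> 'a"
  assumes "mult_functionals_total TYPE('a)"
    and "right_module act"
    and "multi_A_linear2 act E"
    and "multi_A_linear2 act F"
    and "bounded2 E"
    and "strong2 E"
  shows "((\<forall>x y. E x y = 0 \<longrightarrow> F x y = 0) \<longleftrightarrow> (\<exists>c. \<forall>x y. F x y = c * E x y))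
    \<and> ((\<forall>x y. E x y = 0 \<longrightarrow> F x y = 0) \<longrightarrow> bounded2 F)
    \<and> ((\<exists>c. \<forall>x y. F x y = c * E x y) \<longrightarrow> bounded2 F)"
proof -
  have comm: "\<And>a b :: 'a. a * b = b * a"
    using assms(1) by (rule mult_functionals_total_imp_commute)
  have E: "A_sesquilinear act E" and F: "A_sesquilinear act F"
    using assms(3,4) by (simp_all add: multi_A_linear2_imp_A_sesquilinear)
  have multiple: "\<exists>c. \<forall>x y. F x y = c * E x y" if "\<forall>x y. E x y = 0 \<longrightarrow> F x y = 0"
    using kernel_inclusion_imp_mult_left[OF comm E F _ assms(6)] that by blast
  have bounded: "bounded2 F" if "\<exists>c. \<forall>x y. F x y = c * E x y"
  proof -
    from that obtain c where "F = (\<lambda>x y. c * E x y)"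
      by blast
    then show ?thesis
      using assms(5) by (simp add: bounded2_mult_left)
  qed
  show ?thesis
    using multiple bounded by auto
qed

end
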